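(* For every $r\ge1$, let $L^\bullet=\mathrm{Log}(\mathrm{Sem}^\bullet)$ and $L^{\circ r}=L^\bullet\circ\cdots\circ L^\bullet$ ($r$ times). Then $$F^r_{\rm Sem}=F_{\rm lin}\exp\Big(\sum_{\mathbf{m}\in\mathcal{A}(F)^*}(L^{\circ r})^{\mathbf{m}}D_{\mathbf{m}}\Big),$$ i.e. the mould ${}_r\mathrm{Sem}^\bullet$ with $F^r_{\rm Sem}=F_{\rm lin}(\sum{}_r\mathrm{Sem}^{\mathbf{m}}D_{\mathbf{m}})$ can be taken with $\mathrm{Log}[{}_r\mathrm{Sem}^\bullet]=\mathrm{Log}(\mathrm{Sem}^\bullet)\circ\cdots\circ\mathrm{Log}(\mathrm{Sem}^\bullet)$ ($r$ times).
   Context: Fix $\nu\ge1$, $\lambda\in\mathbb{C}^\nu$, $\lambda\cdot m=\sum_i\lambda_im_i$. Let $f(x)=(e^{\lambda_1}x_1,\dots,e^{\lambda_\nu}x_\nu)+h(x)$ be a local analytic diffeomorphism of $(\mathbb{C}^\nu,0)$, $F(\varphi)=\varphi\circ f$ on $\mathbb{C}[[x]]$, $F_{\rm lin}(x^m)=e^{\lambda\cdot m}x^m$. An operator is homogeneous of degree $m\in\mathbb{Z}^\nu$ if it maps each $x^k$ to a multiple of $x^{k+m}$. Write $F=F_{\rm lin}\exp(\sum_{m\in\mathcal{A}(F)}D_m)$ with $D_m$ homogeneous derivations of degree $m$, $\mathcal{A}(F)\subset\mathbb{Z}^\nu$ taken closed under addition (degrees with zero operator allowed). Words $\mathbf{m}=m_1\cdots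 m_r$ (possibly empty), $D_{\mathbf{m}}=D_{m_1}\circ\cdots\circ D_{m_r}$, $D_\emptyset=\mathrm{Id}$, $\|\mathbf{m}\|=m_1+\dots+m_r$. Moulds are maps from words to $\mathbb{C}$, identified with series $\sum M^{\mathbf{a}}\mathbf{a}$ in non-commuting letters; product $(M\cdot N)^{\mathbf{a}}=\sum_{\mathbf{a}^1\mathbf{a}^2=\mathbf{a}}M^{\mathbf{a}^1}N^{\mathbf{a}^2}$; $I^\bullet$ is $1$ on length-one words, $0$ elsewhere; $\mathrm{Exp}\,M=\sum_{k\ge0}M^{\cdot k}/k!$ for $M^\emptyset=0$; for $M$ with $M^\emptyset=1$, $\mathrm{Log}\,M$ is the mould with $\sum(\mathrm{Log}M)^{\mathbf{a}}\mathbf{a}=\log(\sum M^{\mathbf{a}}\mathbf{a})$, $\log(1+y)=\sum_{k\ge1}(-1)^{k+1}y^k/k$; $e^\Delta(M)^{\mathbf{m}}=e^{-\lambda\cdot\|\mathbf{m}\|}M^{\mathbf{m}}$. Composition: $M\circ N$ has generating series $\sum_{\mathbf{b}}M^{\mathbf{b}}\Phi_N^{b_1}\cdots\Phi_N^{b_r}$ with $\Phi_N^{c}=\sum_{\mathbf{a}\neq\emptyset,\|\mathbf{a}\|=c}N^{\mathbf{a}}\mathbf{a}$. Universal moulds: $\mathrm{Dem}^\bullet$ equals $1/(1-e^{\lambda\cdot m})$ on one-letter words $m$ with $e^{\lambda\cdot m}\neq1$ and $0$ on all other words; $\mathrm{Sem}^\bullet=e^\Delta(\mathrm{Exp}\,\mathrm{Dem}^\bullet)\cdot\mathrm{Exp}(I^\bullet)\cdot\mathrm{Exp}(-\mathrm{Dem}^\bullet)$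 (it satisfies $\mathrm{Sem}^\emptyset=1$). Trimmed form up to order $r$: $F^0_{\rm Sem}=F$; given $F^{i-1}_{\rm Sem}=F_{\rm lin}\exp(\sum_m{}_iD_m)$ with ${}_iD_m$ homogeneous derivations of degree $m$, let $\mathbf{V}_i=\sum_{m:\,e^{\lambda\cdot m}\neq1}{}_iD_m/(1-e^{\lambda\cdot m})$ and $F^i_{\rm Sem}=\exp(\mathbf{V}_i)F^{i-1}_{\rm Sem}\exp(-\mathbf{V}_i)$. *)

theory Defs
  imports "HOL-Analysis.Analysis"
begin

section \<open>Formal power series in the variables x_i, i :: 'n (finite), nu = CARD('n)\<close>

type_synonym 'n mono = "'n \<Rightarrow> nat"
type_synonym 'n deg = "'n \<Rightarrow> int"
type_synonym 'n series = "'n mono \<Rightarrow> complex"  (* element of C[[x]], by coefficients *)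
type_synonym 'n op = "'n series \<Rightarrow> 'n series"

definition tdeg :: "('n::finite \<Rightarrow> 'a::comm_monoid_add) \<Rightarrow> 'a" where
  "tdeg k = (\<Sum>i\<in>UNIV. k i)"

definition unitv :: "'n \<Rightarrow> 'n mono" where
  "unitv l = (\<lambda>t. if t = l then 1 else 0)"

definition sone :: "'n series" where
  "sone = (\<lambda>j. if j = (\<lambda>_. 0) then 1 else 0)"

definition smult :: "'n::finite series \<Rightarrow> 'n series \<Rightarrow> 'n series" where
  "smult \<phi> \<psi> = (\<lambda>j. \<Sum>a\<in>{a. \<forall>i. a i \<le> j i}. \<phi> a * \<psi> (\<lambda>i. j i - a i))"

fun spow :: "'n::finite series \<Rightarrow> nat \<Rightarrow> 'n series" where
  "spow g 0 = sone"
| "spow g (Suc n) = smult g (spow g n)"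

definition sprod :: "('n::finite \<Rightarrow> 'n series) \<Rightarrow> 'n series" where
  "sprod g = (\<lambda>j. \<Sum>a\<in>{a :: 'n \<Rightarrow> 'n mono. (\<lambda>t. \<Sum>i\<in>UNIV. a i t) = j}. \<Prod>i\<in>UNIV. g i (a i))"

text \<open>The substitution operator F(phi) = phi o f, for f = (f_1,...,f_nu) without constant
  terms: F(phi) = sum_k phi_k prod_i f_i^(k_i); only |k| <= |j| contribute to x^j.\<close>
definition compF :: "('n::finite \<Rightarrow> 'n series) \<Rightarrow> 'n op" where
  "compF f \<phi> = (\<lambda>j. \<Sum>k\<in>{k. tdeg k \<le> tdeg j}. \<phi> k * sprod (\<lambda>i. spow (f i) (k i)) j)"

definition ldot :: "('n::finite \<Rightarrow> complex) \<Rightarrow> 'n deg \<Rightarrow> complex" where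
  "ldot lam m = (\<Sum>i\<in>UNIV. lam i * of_int (m i))"

definition Flin :: "('n::finite \<Rightarrow> complex) \<Rightarrow> 'n op" where
  "Flin lam \<phi> = (\<lambda>k. exp (ldot lam (\<lambda>i. int (k i))) * \<phi> k)"

text \<open>Homogeneous (continuous linear) operator of degree m: x^k is sent to c_k x^(k+m).\<close>
definition hom_op :: "'n deg \<Rightarrow> 'n op \<Rightarrow> bool" where
  "hom_op m T \<longleftrightarrow> (\<exists>c :: 'n mono \<Rightarrow> complex. \<forall>\<phi> j. T \<phi> j =
     (if (\<forall>i. m i \<le> int (j i))
      then c (\<lambda>i. nat (int (j i) - m i)) * \<phi> (\<lambda>i. nat (int (j i) - m i)) else 0))"

definition is_derivation :: "'n::finite op \<Rightarrow> bool" where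
  "is_derivation T \<longleftrightarrow>
     (\<forall>\<phi> \<psi>. T (smult \<phi> \<psi>) = (\<lambda>j. smult (T \<phi>) \<psi> j + smult \<phi> (T \<psi>) j))"

definition hom_der :: "'n::finite deg \<Rightarrow> 'n op \<Rightarrow> bool" where
  "hom_der m T \<longleftrightarrow> hom_op m T \<and> is_derivation T"

definition opsum :: "('i \<Rightarrow> 'n op) \<Rightarrow> 'i set \<Rightarrow> 'n op" where
  "opsum D S \<phi> = (\<lambda>j. infsum (\<lambda>m. D m \<phi> j) S)"

definition opscale :: "complex \<Rightarrow> 'n op \<Rightarrow> 'n op" where
  "opscale c T \<phi> = (\<lambda>j. c * T \<phi> j)"

definition opzero :: "'n op" where
  "opzero \<phi> = (\<lambda>j. 0)"

definition opexp :: "'n op \<Rightarrow> 'n op" where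
  "opexp T \<phi> = (\<lambda>j. infsum (\<lambda>n. (T ^^ n) \<phi> j / fact n) UNIV)"

fun Dword :: "('n deg \<Rightarrow> 'n op) \<Rightarrow> 'n deg list \<Rightarrow> 'n op" where
  "Dword D [] = id"
| "Dword D (m # w) = D m \<circ> Dword D w"

type_synonym 'n mould = "'n deg list \<Rightarrow> complex"

definition wnorm :: "'n deg list \<Rightarrow> 'n deg" where
  "wnorm w = (\<lambda>i. sum_list (map (\<lambda>m. m i) w))"

definition mone :: "'n mould" where
  "mone w = (if w = [] then 1 else 0)"

definition mmul :: "'n mould \<Rightarrow> 'n mould \<Rightarrow> 'n mould" where
  "mmul M N w = (\<Sum>k\<le>length w. M (take k w) * N (drop k w))"

fun mpow :: "'n mould \<Rightarrow> nat \<Rightarrow> 'n mould" where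
  "mpow M 0 = mone"
| "mpow M (Suc k) = mmul M (mpow M k)"

definition mI :: "'n mould" where
  "mI w = (if length w = 1 then 1 else 0)"

definition mExp :: "'n mould \<Rightarrow> 'n mould" where
  "mExp M w = infsum (\<lambda>k. mpow M k w / fact k) UNIV"

text \<open>Log M, for M with M(empty) = 1: log(1+y) = sum_(k>=1) (-1)^(k+1) y^k / k with y = M - 1.\<close>
definition mLog :: "'n mould \<Rightarrow> 'n mould" where
  "mLog M w = infsum (\<lambda>k. (-1) ^ (k + 1) / of_nat k * mpow (\<lambda>v. M v - mone v) k w) {1..}"

definition eDelta :: "('n::finite \<Rightarrow> complex) \<Rightarrow> 'n mould \<Rightarrow> 'n mould" where
  "eDelta lam M w = exp (- ldot lam (wnorm w)) * M w"

text \<open>Mould composition: (M o N)^a = sum over factorisations a = a^1...a^r into nonempty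
  words of M^(||a^1||...||a^r||) N^(a^1) ... N^(a^r) (coefficient of a in the generating series
  sum_b M^b Phi_N^(b_1) ... Phi_N^(b_r)).\<close>
definition mcomp :: "'n mould \<Rightarrow> 'n mould \<Rightarrow> 'n mould" where
  "mcomp M N a = (\<Sum>ps\<in>{ps. concat ps = a \<and> [] \<notin> set ps}.
                     M (map wnorm ps) * prod_list (map N ps))"

definition mcomp_pow :: "'n mould \<Rightarrow> nat \<Rightarrow> 'n mould" where
  "mcomp_pow L r = ((\<lambda>M. mcomp M L) ^^ (r - 1)) L"

definition Dem :: "('n::finite \<Rightarrow> complex) \<Rightarrow> 'n mould" where
  "Dem lam w = (case w of [m] \<Rightarrow> (if exp (ldot lam m) \<noteq> 1 then 1 / (1 - exp (ldot lam m)) else 0)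
                          | _ \<Rightarrow> 0)"

definition Sem :: "('n::finite \<Rightarrow> complex) \<Rightarrow> 'n mould" where
  "Sem lam = mmul (mmul (eDelta lam (mExp (Dem lam))) (mExp mI)) (mExp (\<lambda>w. - Dem lam w))"

definition wordsum :: "'n mould \<Rightarrow> ('n deg \<Rightarrow> 'n op) \<Rightarrow> 'n deg set \<Rightarrow> 'n op" where
  "wordsum M D A \<phi> = (\<lambda>j. infsum (\<lambda>w. M w * Dword D w \<phi> j) (lists A))"

definition Vgen :: "('n::finite \<Rightarrow> complex) \<Rightarrow> ('n deg \<Rightarrow> 'n op) \<Rightarrow> 'n op" where
  "Vgen lam DD = opsum (\<lambda>m. if exp (ldot lam m) \<noteq> 1
                            then opscale (1 / (1 - exp (ldot lam m))) (DD m) else opzero) UNIV"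

end

theory Submission
  imports Defs "HOL-Computational_Algebra.Formal_Power_Series"
begin

text \<open>Every letter of A has total degree at least one, so only finitely many words contribute to
  a given coefficient, and M \<mapsto> wordsum M D A is a morphism from moulds to operators: the mould
  product becomes composition, Exp becomes exp and Log becomes log. Hence conjugating
  F_lin exp(sum_m D_m) by exp(V), V = wordsum Dem, gives F_lin wordsum(Sem) =
  F_lin exp(wordsum(Log Sem)). Because F_lin is injective and Log inverts Exp, the generator of
  such a form is unique, so the letters of the next trimming step are the homogeneous components
  of wordsum(Log Sem) in the letters of the current one. Substituting these components into a
  word sum composes moulds, wordsum M (DD (i+1)) = wordsum (M \<circ> Log Sem) (DD i), and descending
  from step r to the original letters D_m yields the r-fold composition.\<close>

lemma infsum_eq_sum_superset:
  fixes g :: "'a \<Rightarrow> 'b::{comm_monoid_add, t2_space}"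
  assumes "finite T" "T \<subseteq> S" "\<And>x. x \<in> S - T \<Longrightarrow> g x = 0"
  shows "infsum g S = sum g T"
proof -
  have "infsum g S = infsum g T"
    by (rule infsum_cong_neutral) (use assms in auto)
  then show ?thesis using assms(1) by simp
qed

section \<open>The algebra of moulds\<close>

lemma mmul_Nil [simp]: "mmul M N [] = M [] * N []"
  by (simp add: mmul_def)

lemma mmul_Cons: "mmul M N (x # w) = M [] * N (x # w) + mmul (\<lambda>u. M (x # u)) N w"
  unfolding mmul_def length_Cons sum.atMost_Suc_shift by simp

lemma mmul_add_left: "mmul (\<lambda>u. M u + M' u) N w = mmul M N w + mmul M' N w"
  unfolding mmul_def by (simp add: algebra_simps sum.distrib)

lemma mmul_scale_left: "mmul (\<lambda>u. a * M u) N w = a * mmul M N w"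
  unfolding mmul_def by (simp add: algebra_simps sum_distrib_left)

lemma mmul_assoc: "mmul (mmul A B) C w = mmul A (mmul B C) w"
proof (induction w arbitrary: A)
  case Nil
  then show ?case by simp
next
  case (Cons x w)
  have "(\<lambda>u. mmul A B (x # u)) = (\<lambda>u. A [] * B (x # u) + mmul (\<lambda>u. A (x # u)) B u)"
    by (simp add: mmul_Cons)
  then have "mmul (mmul A B) C (x # w) = A [] * B [] * C (x # w) +
      (A [] * mmul (\<lambda>u. B (x # u)) C w + mmul (mmul (\<lambda>u. A (x # u)) B) C w)"
    by (simp add: mmul_Cons mmul_add_left mmul_scale_left)
  also have "\<dots> = mmul A (mmul B C) (x # w)"
    by (simp add: mmul_Cons Cons.IH algebra_simps)
  finally show ?case .
qed

lemma mone_Nil [simp]: "mone [] = 1" and mone_Cons [simp]: "mone (x # w) = 0"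
  by (simp_all add: mone_def)

lemma mmul_mone_left [simp]: "mmul mone N = N"
proof
  fix w show "mmul mone N w = N w"
    by (cases w) (simp_all add: mmul_Cons, simp add: mmul_def)
qed

lemma mmul_mone_right [simp]: "mmul M mone = M"
proof
  fix w show "mmul M mone w = M w"
    by (induction w arbitrary: M) (simp_all add: mmul_Cons)
qed

lemma mpow_add: "mpow M (n + m) = mmul (mpow M n) (mpow M m)"
proof (induction n)
  case 0
  then show ?case by simp
next
  case (Suc n)
  then have "mpow M (Suc n + m) = mmul M (mmul (mpow M n) (mpow M m))" by simp
  then show ?case by (simp add: fun_eq_iff mmul_assoc)
qed

lemma mpow_eq_0_if_length_less:
  assumes "Y [] = 0" and "length w < k"
  shows "mpow Y k w = 0"
  using assms(2)
proof (induction k arbitrary: w)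
  case 0
  then show ?case by simp
next
  case (Suc k)
  have "Y (take i w) * mpow Y k (drop i w) = 0" if "i \<le> length w" for i
  proof (cases "i = 0")
    case True
    then show ?thesis using assms by simp
  next
    case False
    then have "length (drop i w) < k" using Suc.prems that by auto
    then show ?thesis by (simp add: Suc.IH)
  qed
  then show ?case unfolding mpow.simps mmul_def by (intro sum.neutral) auto
qed

text \<open>Substitution of a mould y with y [] = 0 into a power series; cutting the sum at
  length w loses nothing, since then mpow y n w = 0 for n > length w.\<close>
definition meval :: "'n mould \<Rightarrow> complex fps \<Rightarrow> 'n mould" where
  "meval y a w = (\<Sum>n\<le>length w. fps_nth a n * mpow y n w)"

lemma meval_eq_sum_atMost:
  assumes "y [] = 0" "length w \<le> N"
  shows "meval y a w = (\<Sum>n\<le>N. fps_nth a n * mpow y n w)"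
  unfolding meval_def
  by (rule sum.mono_neutral_left) (use assms mpow_eq_0_if_length_less[of y] in auto)

lemma meval_Nil: "meval y a [] = fps_nth a 0"
  by (simp add: meval_def)

lemma meval_add: "meval y (a + b) w = meval y a w + meval y b w"
  by (simp add: meval_def algebra_simps sum.distrib)

lemma meval_diff: "meval y (a - b) w = meval y a w - meval y b w"
  by (simp add: meval_def algebra_simps sum_subtractf)

lemma meval_one: "meval y 1 w = mone w"
  unfolding meval_def by (simp add: sum.atMost_shift)

lemma meval_X:
  assumes "y [] = 0"
  shows "meval y fps_X w = y w"
proof (cases w)
  case Nil
  then show ?thesis using assms by (simp add: meval_def)
next
  case (Cons x v)
  have "meval y fps_X w = (\<Sum>n\<le>length w. if n = 1 then mpow y 1 w else 0)"
    unfolding meval_def by (rule sum.cong) auto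
  also have "\<dots> = y w" using Cons by (auto simp: Suc_le_eq)
  finally show ?thesis .
qed

lemma meval_mult:
  assumes y0: "y [] = 0"
  shows "mmul (meval y a) (meval y b) w = meval y (a * b) w"
proof -
  let ?N = "length w"
  let ?g = "\<lambda>n m. fps_nth a n * fps_nth b m * mpow y (n + m) w"
  have "mmul (meval y a) (meval y b) w =
     (\<Sum>k\<le>?N. (\<Sum>n\<le>?N. fps_nth a n * mpow y n (take k w)) *
              (\<Sum>m\<le>?N. fps_nth b m * mpow y m (drop k w)))"
    unfolding mmul_def by (intro sum.cong refl arg_cong2[where f = times] meval_eq_sum_atMost y0) auto
  also have "\<dots> = (\<Sum>k\<le>?N. \<Sum>n\<le>?N. \<Sum>m\<le>?N.
      fps_nth a n * fps_nth b m * (mpow y n (take k w) * mpow y m (drop k w)))"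
    by (simp only: sum_product) (simp add: mult_ac)
  also have "\<dots> = (\<Sum>n\<le>?N. \<Sum>k\<le>?N. \<Sum>m\<le>?N.
      fps_nth a n * fps_nth b m * (mpow y n (take k w) * mpow y m (drop k w)))"
    by (rule sum.swap)
  also have "\<dots> = (\<Sum>n\<le>?N. \<Sum>m\<le>?N. \<Sum>k\<le>?N.
      fps_nth a n * fps_nth b m * (mpow y n (take k w) * mpow y m (drop k w)))"
    by (intro sum.cong refl sum.swap)
  also have "\<dots> = (\<Sum>n\<le>?N. \<Sum>m\<le>?N. ?g n m)"
    by (simp add: mpow_add mmul_def sum_distrib_left)
  also have "\<dots> = (\<Sum>(n, m)\<in>{(i, j). i + j \<le> ?N}. ?g n m)"
    unfolding sum.cartesian_product
  proof (rule sum.mono_neutral_right)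
    show "\<forall>p\<in>{..?N} \<times> {..?N} - {(i, j). i + j \<le> ?N}. (case p of (n, m) \<Rightarrow> ?g n m) = 0"
    proof
      fix p assume "p \<in> {..?N} \<times> {..?N} - {(i, j). i + j \<le> ?N}"
      then have "mpow y (fst p + snd p) w = 0"
        by (intro mpow_eq_0_if_length_less[where Y = y, OF y0]) auto
      then show "(case p of (n, m) \<Rightarrow> ?g n m) = 0" by (simp add: case_prod_beta)
    qed
  qed auto
  also have "\<dots> = (\<Sum>p\<le>?N. \<Sum>i\<le>p. ?g i (p - i))"
    by (rule sum.triangle_reindex_eq)
  also have "\<dots> = meval y (a * b) w"
    unfolding meval_def fps_mult_nth atLeast0AtMost by (simp add: sum_distrib_right)
  finally show ?thesis .
qed

lemma meval_power:
  assumes "y [] = 0"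
  shows "mpow (meval y a) k = meval y (a ^ k)"
proof (induction k)
  case 0
  then show ?case by (simp add: fun_eq_iff meval_one)
next
  case (Suc k)
  show ?case
    unfolding mpow.simps Suc.IH by (simp add: fun_eq_iff meval_mult[where y = y, OF assms])
qed

lemma meval_compose:
  assumes y0: "y [] = 0" and b0: "fps_nth b 0 = 0"
  shows "meval (meval y b) a w = meval y (a oo b) w"
proof -
  let ?N = "length w"
  have "meval (meval y b) a w = (\<Sum>n\<le>?N. fps_nth a n * meval y (b ^ n) w)"
    by (simp only: meval_def[of "meval y b"] meval_power[where y = y, OF y0])
  also have "\<dots> = (\<Sum>m\<le>?N. \<Sum>n\<le>?N. fps_nth a n * fps_nth (b ^ n) m * mpow y m w)"
    unfolding meval_def by (subst sum.swap) (simp add: sum_distrib_left mult_ac)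
  also have "\<dots> = (\<Sum>m\<le>?N. \<Sum>n\<le>m. fps_nth a n * fps_nth (b ^ n) m * mpow y m w)"
    by (intro sum.cong refl sum.mono_neutral_right)
      (use startsby_zero_power_prefix[OF b0] in auto)
  also have "\<dots> = meval y (a oo b) w"
    unfolding meval_def fps_compose_nth atLeast0AtMost by (simp add: sum_distrib_right)
  finally show ?thesis .
qed

lemma mExp_eq_meval:
  assumes "Z [] = 0"
  shows "mExp Z = meval Z (fps_exp 1)"
proof
  fix w
  have "mExp Z w = (\<Sum>k\<le>length w. mpow Z k w / fact k)"
    unfolding mExp_def
    by (rule infsum_eq_sum_superset) (use mpow_eq_0_if_length_less[of Z, OF assms] in auto)
  then show "mExp Z w = meval Z (fps_exp 1) w"
    by (simp add: meval_def fps_exp_def)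
qed

lemma mLog_eq_meval:
  assumes "S [] = 1"
  shows "mLog S = meval (\<lambda>v. S v - mone v) (fps_ln 1)"
proof
  fix w
  let ?y = "\<lambda>v. S v - mone v"
  have y0: "?y [] = 0" using assms by simp
  have "mLog S w = (\<Sum>k\<in>{1..length w}. (-1) ^ (k + 1) / of_nat k * mpow ?y k w)"
    unfolding mLog_def
    by (rule infsum_eq_sum_superset) (use mpow_eq_0_if_length_less[of ?y, OF y0] in auto)
  also have "\<dots> = (\<Sum>k\<in>{1..length w}. fps_nth (fps_ln 1) k * mpow ?y k w)"
  proof (intro sum.cong refl)
    fix k assume "k \<in> {1..length w}"
    then obtain n where "k = Suc n" by (cases k) auto
    then show "(-1) ^ (k + 1) / of_nat k * mpow ?y k w = fps_nth (fps_ln 1) k * mpow ?y k w"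
      by (simp add: fps_ln_nth)
  qed
  also have "\<dots> = meval ?y (fps_ln 1) w"
    unfolding meval_def by (rule sum.mono_neutral_left) (auto simp: Suc_le_eq)
  finally show "mLog S w = meval ?y (fps_ln 1) w" .
qed

lemma mExp_Nil: "M [] = 0 \<Longrightarrow> mExp M [] = 1"
  by (simp add: mExp_eq_meval meval_Nil)

lemma mLog_Nil: "S [] = 1 \<Longrightarrow> mLog S [] = 0"
  by (simp add: mLog_eq_meval meval_Nil)

lemma fps_ln_eq_inverse_exp: "fps_ln (1::complex) = fps_inv (fps_exp 1 - 1)"
  by (rule fps_ln_fps_exp_inv) simp

lemma fps_exp_compose_ln: "fps_exp (1::complex) oo fps_ln 1 = 1 + fps_X"
proof -
  have "fps_exp (1::complex) oo fps_ln 1 = ((fps_exp 1 - 1) oo fps_ln 1) + (1 oo fps_ln 1)"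
    by (metis fps_compose_add_distrib diff_add_cancel)
  also have "\<dots> = fps_X + 1"
    unfolding fps_ln_eq_inverse_exp by (subst fps_inv_right) simp_all
  finally show ?thesis by simp
qed

lemma fps_ln_compose_exp: "fps_ln (1::complex) oo (fps_exp 1 - 1) = fps_X"
  unfolding fps_ln_eq_inverse_exp by (rule fps_inv) simp_all

lemma mExp_mLog:
  assumes "S [] = 1"
  shows "mExp (mLog S) = S"
proof -
  let ?y = "\<lambda>v. S v - mone v"
  have y0: "?y [] = 0" using assms by simp
  have "mExp (mLog S) = meval (meval ?y (fps_ln 1)) (fps_exp 1)"
    using mExp_eq_meval[where Z = "mLog S", OF mLog_Nil[where S = S, OF assms]] mLog_eq_meval[where S = S, OF assms] by simp
  also have "\<dots> = meval ?y (fps_exp 1 oo fps_ln 1)"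
    by (rule ext, rule meval_compose[where y = ?y, OF y0]) simp
  also have "\<dots> = S"
    by (simp add: fun_eq_iff fps_exp_compose_ln meval_add meval_one meval_X[where y = ?y, OF y0])
  finally show ?thesis .
qed

lemma mLog_mExp:
  assumes m0: "M [] = 0"
  shows "mLog (mExp M) = M"
proof -
  have "(\<lambda>v. mExp M v - mone v) = meval M (fps_exp 1 - 1)"
    by (simp add: fun_eq_iff mExp_eq_meval[where Z = M, OF m0] meval_diff meval_one)
  then have "mLog (mExp M) = meval (meval M (fps_exp 1 - 1)) (fps_ln 1)"
    using mLog_eq_meval[where S = "mExp M", OF mExp_Nil[where M = M, OF m0]] by simp
  also have "\<dots> = meval M (fps_ln 1 oo (fps_exp 1 - 1))"
    by (rule ext, rule meval_compose[where y = M, OF m0]) simp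
  also have "\<dots> = M"
    by (simp add: fun_eq_iff fps_ln_compose_exp meval_X[where y = M, OF m0])
  finally show ?thesis .
qed

section \<open>Word sums of homogeneous operators\<close>

definition deg_le :: "'n deg \<Rightarrow> 'n mono \<Rightarrow> bool" where
  "deg_le m j \<longleftrightarrow> (\<forall>i. m i \<le> int (j i))"

definition mono_sub :: "'n mono \<Rightarrow> 'n deg \<Rightarrow> 'n mono" where
  "mono_sub j m = (\<lambda>i. nat (int (j i) - m i))"

definition hom_coeff :: "'n deg \<Rightarrow> 'n op \<Rightarrow> 'n mono \<Rightarrow> complex" where
  "hom_coeff m T = (SOME c. \<forall>\<phi> j. T \<phi> j =
     (if (\<forall>i. m i \<le> int (j i))
      then c (\<lambda>i. nat (int (j i) - m i)) * \<phi> (\<lambda>i. nat (int (j i) - m i)) else 0))"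

lemma hom_op_apply:
  assumes "hom_op m T"
  shows "T \<phi> j = (if deg_le m j then hom_coeff m T (mono_sub j m) * \<phi> (mono_sub j m) else 0)"
proof -
  let ?Q = "\<lambda>c. \<forall>\<phi> j. T \<phi> j =
     (if (\<forall>i. m i \<le> int (j i))
      then c (\<lambda>i. nat (int (j i) - m i)) * \<phi> (\<lambda>i. nat (int (j i) - m i)) else 0)"
  have "\<exists>c. ?Q c" using assms unfolding hom_op_def by simp
  then have "?Q (hom_coeff m T)" unfolding hom_coeff_def by (rule someI_ex)
  then show ?thesis unfolding deg_le_def mono_sub_def by blast
qed

text \<open>The coefficient of x^j in D_w phi is a multiple of the coefficient of phi at j - ||w||,
  and it vanishes unless every partial subtraction of the letters of w stays in N^nu
  (word_fits w j); word_end w j is the exponent that is reached.\<close>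
fun word_fits :: "'n deg list \<Rightarrow> 'n mono \<Rightarrow> bool" where
  "word_fits [] j = True"
| "word_fits (m # w) j = (deg_le m j \<and> word_fits w (mono_sub j m))"

fun word_end :: "'n deg list \<Rightarrow> 'n mono \<Rightarrow> 'n mono" where
  "word_end [] j = j"
| "word_end (m # w) j = word_end w (mono_sub j m)"

fun word_coeff :: "('n deg \<Rightarrow> 'n op) \<Rightarrow> 'n deg list \<Rightarrow> 'n mono \<Rightarrow> complex" where
  "word_coeff D [] j = 1"
| "word_coeff D (m # w) j = hom_coeff m (D m) (mono_sub j m) * word_coeff D w (mono_sub j m)"

lemma Dword_apply:
  assumes "\<forall>m\<in>set w. hom_op m (D m)"
  shows "Dword D w \<phi> j = (if word_fits w j then word_coeff D w j * \<phi> (word_end w j) else 0)"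
  using assms
proof (induction w arbitrary: j)
  case Nil
  then show ?case by simp
next
  case (Cons m w)
  then show ?case by (simp add: hom_op_apply[of m "D m"])
qed

lemma word_fits_append: "word_fits (u @ v) j \<longleftrightarrow> word_fits u j \<and> word_fits v (word_end u j)"
  by (induction u arbitrary: j) auto

lemma word_end_append: "word_end (u @ v) j = word_end v (word_end u j)"
  by (induction u arbitrary: j) auto

lemma word_coeff_append: "word_coeff D (u @ v) j = word_coeff D u j * word_coeff D v (word_end u j)"
  by (induction u arbitrary: j) auto

lemma wnorm_Nil [simp]: "wnorm [] = (\<lambda>i. 0)"
  by (simp add: wnorm_def)

lemma wnorm_Cons: "wnorm (m # w) = (\<lambda>i. m i + wnorm w i)"
  by (simp add: wnorm_def)

lemma word_end_eq:
  "word_fits w j \<Longrightarrow> int (word_end w j i) = int (j i) - wnorm w i"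
  by (induction w arbitrary: j) (auto simp: wnorm_def mono_sub_def deg_le_def)

lemma deg_le_wnorm: "word_fits w j \<Longrightarrow> deg_le (wnorm w) j"
  using word_end_eq[of w j] unfolding deg_le_def by (metis diff_ge_0_iff_ge of_nat_0_le_iff)

lemma word_end_eq_mono_sub_iff:
  assumes "word_fits w j" "deg_le c j"
  shows "word_end w j = mono_sub j c \<longleftrightarrow> wnorm w = c"
proof -
  have "word_end w j = mono_sub j c \<longleftrightarrow> (\<forall>i. int (word_end w j i) = int (mono_sub j c i))"
    by (auto simp: fun_eq_iff)
  also have "\<dots> \<longleftrightarrow> (\<forall>i. wnorm w i = c i)"
    using word_end_eq[OF assms(1)] assms(2) by (auto simp: mono_sub_def deg_le_def)
  finally show ?thesis by (auto simp: fun_eq_iff)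
qed

lemma le_tdeg: "(j::'n::finite mono) i \<le> tdeg j"
  unfolding tdeg_def by (rule member_le_sum) auto

lemma tdeg_mono_sub:
  fixes j :: "'n::finite mono"
  assumes "deg_le m j"
  shows "int (tdeg (mono_sub j m)) = int (tdeg j) - tdeg m"
proof -
  have "int (tdeg (mono_sub j m)) = (\<Sum>i\<in>UNIV. int (j i) - m i)"
    using assms unfolding tdeg_def mono_sub_def deg_le_def by (simp add: of_nat_sum)
  also have "\<dots> = int (tdeg j) - tdeg m"
    unfolding tdeg_def by (simp add: sum_subtractf of_nat_sum)
  finally show ?thesis .
qed

lemma tdeg_wnorm_Cons: "tdeg (wnorm (m # w)) = tdeg m + tdeg (wnorm w)"
  unfolding tdeg_def wnorm_Cons by (simp add: sum.distrib)

lemma tdeg_zero: "tdeg (\<lambda>i::'n::finite. 0::int) = 0"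
  by (simp add: tdeg_def)

lemma length_le_tdeg_wnorm:
  fixes w :: "'n::finite deg list"
  assumes "\<forall>m\<in>set w. 1 \<le> tdeg m"
  shows "int (length w) \<le> tdeg (wnorm w)"
  using assms by (induction w) (auto simp: tdeg_wnorm_Cons tdeg_zero)

definition deg_box :: "nat \<Rightarrow> 'n deg set" where
  "deg_box B = {m. \<forall>i. m i \<in> {- int B..int B}}"

lemma finite_deg_box: "finite (deg_box B :: 'n::finite deg set)"
proof -
  have "deg_box B = PiE (UNIV :: 'n set) (\<lambda>_. {- int B..int B})"
    unfolding deg_box_def by (auto simp: PiE_def extensional_def)
  then show ?thesis by (simp add: finite_PiE)
qed

lemma deg_box_mono: "B \<le> B' \<Longrightarrow> deg_box B \<subseteq> deg_box B'"
  unfolding deg_box_def by (auto simp: atLeastAtMost_iff) (meson of_nat_le_iff order.trans neg_le_iff_le)+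

lemma fitting_word_bounded:
  fixes j :: "'n::finite mono"
  assumes "\<forall>m\<in>set w. 1 \<le> tdeg m" "word_fits w j"
  shows "length w \<le> tdeg j \<and> set w \<subseteq> deg_box (tdeg j)"
  using assms
proof (induction w arbitrary: j)
  case Nil
  then show ?case by simp
next
  case (Cons m w)
  let ?j' = "mono_sub j m"
  have le: "deg_le m j" and IH: "length w \<le> tdeg ?j' \<and> set w \<subseteq> deg_box (tdeg ?j')"
    using Cons by auto
  have "1 \<le> tdeg m" using Cons.prems by auto
  then have less: "tdeg ?j' < tdeg j" using tdeg_mono_sub[OF le] by linarith
  have "m \<in> deg_box (tdeg j)"
    unfolding deg_box_def
  proof (intro CollectI allI)
    fix i
    have "m i = int (j i) - int (?j' i)" using le unfolding mono_sub_def deg_le_def by auto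
    moreover have "j i \<le> tdeg j" "?j' i \<le> tdeg ?j'" by (rule le_tdeg)+
    ultimately show "m i \<in> {- int (tdeg j)..int (tdeg j)}" using less by auto
  qed
  then show ?case using IH less deg_box_mono[of "tdeg ?j'" "tdeg j"] by auto
qed

definition fitting_words :: "'n deg set \<Rightarrow> 'n mono \<Rightarrow> 'n deg list set" where
  "fitting_words A j = {w \<in> lists A. word_fits w j}"

lemma Nil_in_fitting_words: "[] \<in> fitting_words A j"
  by (simp add: fitting_words_def)

lemma append_in_fitting_words_iff:
  "u @ v \<in> fitting_words A j \<longleftrightarrow> u \<in> fitting_words A j \<and> v \<in> fitting_words A (word_end u j)"
  by (auto simp: fitting_words_def word_fits_append)

lemma finite_fitting_words:
  fixes j :: "'n::finite mono"
  assumes "\<forall>m\<in>A. 1 \<le> tdeg m"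
  shows "finite (fitting_words A j)"
proof (rule finite_subset)
  show "fitting_words A j \<subseteq> {w. set w \<subseteq> deg_box (tdeg j) \<and> length w \<le> tdeg j}"
    using fitting_word_bounded assms unfolding fitting_words_def by fastforce
  show "finite {w :: 'n deg list. set w \<subseteq> deg_box (tdeg j) \<and> length w \<le> tdeg j}"
    by (rule finite_lists_length_le) (simp add: finite_deg_box)
qed

definition pos_hom_family :: "('n::finite deg \<Rightarrow> 'n op) \<Rightarrow> 'n deg set \<Rightarrow> bool" where
  "pos_hom_family D A \<longleftrightarrow> (\<forall>m\<in>A. hom_op m (D m) \<and> 1 \<le> tdeg m)"

lemma finite_fitting_words_pos_hom:
  "pos_hom_family D A \<Longrightarrow> finite (fitting_words A j)"
  using finite_fitting_words unfolding pos_hom_family_def by blast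

lemma length_le_if_fitting_word:
  "pos_hom_family D A \<Longrightarrow> w \<in> fitting_words A j \<Longrightarrow> length w \<le> tdeg j"
  using fitting_word_bounded[of w j] unfolding pos_hom_family_def fitting_words_def by auto

lemma wordsum_eq_sum:
  assumes D: "pos_hom_family D A"
  shows "wordsum M D A \<phi> j =
    (\<Sum>w\<in>fitting_words A j. M w * (word_coeff D w j * \<phi> (word_end w j)))"
proof -
  have Dword: "Dword D w \<phi> j = (if word_fits w j then word_coeff D w j * \<phi> (word_end w j) else 0)"
    if "w \<in> lists A" for w
    using that D by (intro Dword_apply) (auto simp: pos_hom_family_def)
  have "wordsum M D A \<phi> j = (\<Sum>w\<in>fitting_words A j. M w * Dword D w \<phi> j)"
    unfolding wordsum_def
    by (rule infsum_eq_sum_superset[OF finite_fitting_words_pos_hom[OF D]])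
      (auto simp: fitting_words_def Dword)
  then show ?thesis by (simp add: fitting_words_def Dword)
qed

lemma wordsum_mmul:
  assumes D: "pos_hom_family D A"
  shows "wordsum (mmul M N) D A = wordsum M D A \<circ> wordsum N D A"
proof (intro ext)
  fix \<phi> j
  let ?W = "fitting_words A"
  let ?x = "\<lambda>w. word_coeff D w j * \<phi> (word_end w j)"
  have fin: "\<And>j. finite (?W j)" using finite_fitting_words_pos_hom[OF D] .
  have "wordsum M D A (wordsum N D A \<phi>) j =
     (\<Sum>u\<in>?W j. \<Sum>v\<in>?W (word_end u j). M u * N v * ?x (u @ v))"
    by (simp add: wordsum_eq_sum[OF D] sum_distrib_left word_coeff_append word_end_append mult_ac)
  also have "\<dots> = (\<Sum>(u, v)\<in>Sigma (?W j) (\<lambda>u. ?W (word_end u j)). M u * N v * ?x (u @ v))"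
    by (rule sum.Sigma) (use fin in auto)
  also have "\<dots> = (\<Sum>(w, k)\<in>Sigma (?W j) (\<lambda>w. {..length w}). M (take k w) * N (drop k w) * ?x w)"
  proof (rule sum.reindex_bij_witness[where i = "\<lambda>(w, k). (take k w, drop k w)"
        and j = "\<lambda>(u, v). (u @ v, length u)"])
    fix a assume "a \<in> Sigma (?W j) (\<lambda>w. {..length w})"
    then show "(case a of (w, k) \<Rightarrow> (take k w, drop k w)) \<in> Sigma (?W j) (\<lambda>u. ?W (word_end u j))"
      using append_in_fitting_words_iff[of "take (snd a) (fst a)" "drop (snd a) (fst a)" A j]
      by auto
  qed (auto simp: append_in_fitting_words_iff)
  also have "\<dots> = (\<Sum>w\<in>?W j. \<Sum>k\<le>length w. M (take k w) * N (drop k w) * ?x w)"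
    by (rule sum.Sigma[symmetric]) (use fin in auto)
  also have "\<dots> = wordsum (mmul M N) D A \<phi> j"
    by (simp add: wordsum_eq_sum[OF D] mmul_def sum_distrib_right)
  finally show "wordsum (mmul M N) D A \<phi> j = (wordsum M D A \<circ> wordsum N D A) \<phi> j" by simp
qed

lemma wordsum_mone:
  assumes D: "pos_hom_family D A"
  shows "wordsum mone D A = id"
proof (intro ext)
  fix \<phi> j
  have "wordsum mone D A \<phi> j = (\<Sum>w\<in>fitting_words A j. if w = [] then \<phi> j else 0)"
    unfolding wordsum_eq_sum[OF D] by (rule sum.cong) (auto simp: mone_def)
  also have "\<dots> = \<phi> j"
    using finite_fitting_words_pos_hom[OF D] Nil_in_fitting_words[of A j] by simp
  finally show "wordsum mone D A \<phi> j = id \<phi> j" by simp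
qed

lemma wordsum_mpow:
  assumes "pos_hom_family D A"
  shows "wordsum (mpow M n) D A = wordsum M D A ^^ n"
  by (induction n) (simp_all add: wordsum_mone[OF assms] wordsum_mmul[OF assms])

lemma wordsum_power_series:
  assumes D: "pos_hom_family D A" and M0: "M [] = 0"
  shows "infsum (\<lambda>k. a k * (wordsum M D A ^^ k) \<phi> j) K =
         wordsum (\<lambda>w. infsum (\<lambda>k. a k * mpow M k w) K) D A \<phi> j"
proof -
  let ?W = "fitting_words A j"
  let ?x = "\<lambda>w. word_coeff D w j * \<phi> (word_end w j)"
  let ?K = "K \<inter> {..tdeg j}"
  have pow: "(wordsum M D A ^^ k) \<phi> j = (\<Sum>w\<in>?W. mpow M k w * ?x w)" for k
    by (simp flip: wordsum_mpow[OF D] add: wordsum_eq_sum[OF D])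
  have vanish: "mpow M k w = 0" if "w \<in> ?W" "tdeg j < k" for w k
    using mpow_eq_0_if_length_less[where Y = M, OF M0] length_le_if_fitting_word[OF D that(1)] that(2)
    by simp
  have "infsum (\<lambda>k. a k * (wordsum M D A ^^ k) \<phi> j) K = (\<Sum>k\<in>?K. a k * (wordsum M D A ^^ k) \<phi> j)"
    by (rule infsum_eq_sum_superset) (auto simp: pow vanish)
  also have "\<dots> = (\<Sum>w\<in>?W. \<Sum>k\<in>?K. a k * mpow M k w * ?x w)"
    by (subst sum.swap) (simp add: pow sum_distrib_left mult.assoc)
  also have "\<dots> = wordsum (\<lambda>w. infsum (\<lambda>k. a k * mpow M k w) K) D A \<phi> j"
    unfolding wordsum_eq_sum[OF D]
  proof (rule sum.cong[OF refl])
    fix w assume "w \<in> ?W"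
    then have "infsum (\<lambda>k. a k * mpow M k w) K = (\<Sum>k\<in>?K. a k * mpow M k w)"
      by (intro infsum_eq_sum_superset) (auto simp: vanish)
    then show "(\<Sum>k\<in>?K. a k * mpow M k w * ?x w) = infsum (\<lambda>k. a k * mpow M k w) K * ?x w"
      by (simp add: sum_distrib_right)
  qed
  finally show ?thesis .
qed

lemma opexp_wordsum:
  assumes "pos_hom_family D A" and "M [] = 0"
  shows "opexp (wordsum M D A) = wordsum (mExp M) D A"
proof (intro ext)
  fix \<phi> j
  have "opexp (wordsum M D A) \<phi> j = infsum (\<lambda>k. 1 / fact k * (wordsum M D A ^^ k) \<phi> j) UNIV"
    unfolding opexp_def by simp
  also have "\<dots> = wordsum (\<lambda>w. infsum (\<lambda>k. 1 / fact k * mpow M k w) UNIV) D A \<phi> j"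
    by (rule wordsum_power_series[where M = M, OF assms])
  finally show "opexp (wordsum M D A) \<phi> j = wordsum (mExp M) D A \<phi> j"
    unfolding mExp_def by simp
qed

definition oplog :: "'n op \<Rightarrow> 'n op" where
  "oplog T \<phi> = (\<lambda>j. infsum (\<lambda>k. (-1) ^ (k + 1) / of_nat k *
     ((\<lambda>\<psi> i. T \<psi> i - \<psi> i) ^^ k) \<phi> j) {1..})"

lemma oplog_wordsum:
  assumes D: "pos_hom_family D A" and "S [] = 1"
  shows "oplog (wordsum S D A) = wordsum (mLog S) D A"
proof (intro ext)
  fix \<phi> j
  let ?Y = "\<lambda>v. S v - mone v"
  have Y0: "?Y [] = 0" using assms(2) by simp
  have "(\<lambda>\<psi> i. wordsum S D A \<psi> i - \<psi> i) = wordsum ?Y D A"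
    using wordsum_mone[OF D]
    by (simp add: fun_eq_iff wordsum_eq_sum[OF D] algebra_simps sum_subtractf)
  then have "oplog (wordsum S D A) \<phi> j =
      infsum (\<lambda>k. (-1) ^ (k + 1) / of_nat k * (wordsum ?Y D A ^^ k) \<phi> j) {1..}"
    by (simp add: oplog_def)
  also have "\<dots> = wordsum (mLog S) D A \<phi> j"
    unfolding mLog_def by (rule wordsum_power_series[where M = ?Y, OF D Y0])
  finally show "oplog (wordsum S D A) \<phi> j = wordsum (mLog S) D A \<phi> j" .
qed

lemma Flin_comp_cancel:
  assumes "Flin lam \<circ> X = Flin lam \<circ> Y"
  shows "X = Y"
proof (intro ext)
  fix \<phi> j
  have "Flin lam (X \<phi>) j = Flin lam (Y \<phi>) j" using assms by (metis comp_apply)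
  then show "X \<phi> j = Y \<phi> j" by (simp add: Flin_def)
qed

lemma wordsum_eq_if_Flin_exp_eq:
  assumes D: "pos_hom_family D A" and D': "pos_hom_family D' A'"
    and P0: "P [] = 0" and P'0: "P' [] = 0"
    and eq: "Flin lam \<circ> opexp (wordsum P D A) = Flin lam \<circ> opexp (wordsum P' D' A')"
  shows "wordsum P D A = wordsum P' D' A'"
proof -
  have "wordsum (mExp P) D A = wordsum (mExp P') D' A'"
    using Flin_comp_cancel[OF eq] by (simp add: opexp_wordsum[where M = P, OF D P0] opexp_wordsum[where M = P', OF D' P'0])
  then have "oplog (wordsum (mExp P) D A) = oplog (wordsum (mExp P') D' A')" by simp
  then show ?thesis
    by (simp add: oplog_wordsum[where S = "mExp P", OF D mExp_Nil[where M = P, OF P0]]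
        oplog_wordsum[where S = "mExp P'", OF D' mExp_Nil[where M = P', OF P'0]]
        mLog_mExp[where M = P, OF P0] mLog_mExp[where M = P', OF P'0])
qed

lemma ldot_diff: "ldot lam (\<lambda>i. a i - b i) = ldot lam a - ldot lam b"
  unfolding ldot_def by (simp add: algebra_simps sum_subtractf)

lemma wordsum_comp_Flin:
  assumes D: "pos_hom_family D A"
  shows "wordsum M D A \<circ> Flin lam = Flin lam \<circ> wordsum (eDelta lam M) D A"
proof (intro ext)
  fix \<phi> j
  have "exp (ldot lam (\<lambda>i. int (word_end w j i))) =
      exp (ldot lam (\<lambda>i. int (j i))) * exp (- ldot lam (wnorm w))"
    if "w \<in> fitting_words A j" for w
  proof -
    have "(\<lambda>i. int (word_end w j i)) = (\<lambda>i. int (j i) - wnorm w i)"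
      using that word_end_eq[of w j] by (auto simp: fitting_words_def)
    then show ?thesis by (simp add: ldot_diff exp_diff exp_minus field_simps)
  qed
  then show "(wordsum M D A \<circ> Flin lam) \<phi> j = (Flin lam \<circ> wordsum (eDelta lam M) D A) \<phi> j"
    by (simp add: wordsum_eq_sum[OF D] Flin_def eDelta_def sum_distrib_left mult_ac cong: sum.cong)
qed

lemma opscale_minus_wordsum:
  assumes "pos_hom_family D A"
  shows "opscale (-1) (wordsum M D A) = wordsum (\<lambda>w. - M w) D A"
  by (intro ext) (simp add: opscale_def wordsum_eq_sum[OF assms] sum_negf)

lemma wordsum_letters:
  assumes "\<And>w. length w \<noteq> 1 \<Longrightarrow> M w = 0"
  shows "wordsum M D A \<phi> j = infsum (\<lambda>m. M [m] * D m \<phi> j) A"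
proof -
  have "wordsum M D A \<phi> j = infsum (\<lambda>w. M w * Dword D w \<phi> j) ((\<lambda>m. [m]) ` A)"
    unfolding wordsum_def
  proof (rule infsum_cong_neutral)
    fix w assume w: "w \<in> lists A - (\<lambda>m. [m]) ` A"
    have "length w \<noteq> 1"
    proof
      assume "length w = 1"
      then obtain m where "w = [m]" by (auto simp: length_Suc_conv)
      then show False using w by auto
    qed
    then show "M w * Dword D w \<phi> j = 0" using assms by simp
  qed auto
  also have "\<dots> = infsum (\<lambda>m. M [m] * D m \<phi> j) A"
    by (subst infsum_reindex) (auto simp: inj_on_def comp_def)
  finally show ?thesis .
qed

section \<open>Substitution of word sums into word sums\<close>

lemma finite_factorisations: "finite {ps. concat ps = a \<and> [] \<notin> set ps}"
proof (rule finite_subset)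
  let ?U = "{u. set u \<subseteq> set a \<and> length u \<le> length a}"
  show "{ps. concat ps = a \<and> [] \<notin> set ps} \<subseteq> {ps. set ps \<subseteq> ?U \<and> length ps \<le> length a}"
  proof
    fix ps assume "ps \<in> {ps. concat ps = a \<and> [] \<notin> set ps}"
    then have a: "concat ps = a" and ne: "[] \<notin> set ps" by auto
    from ne have "length ps \<le> length (concat ps)"
    proof (induction ps)
      case (Cons u ps)
      then have "1 \<le> length u" by (cases u) auto
      then show ?case using Cons by simp
    qed simp
    moreover have "set ps \<subseteq> ?U"
      using a member_le_sum_list[of _ "map length ps"] by (auto simp: length_concat)
    ultimately show "ps \<in> {ps. set ps \<subseteq> ?U \<and> length ps \<le> length a}" using a by auto
  qed
  show "finite {ps. set ps \<subseteq> ?U \<and> length ps \<le> length a}"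
    by (rule finite_lists_length_le) (rule finite_lists_length_le, simp)
qed

lemma prod_list_mI: "prod_list (map mI ps) = (if \<forall>u\<in>set ps. length u = 1 then 1 else 0)"
  by (induction ps) (auto simp: mI_def)

lemma all_singletons_iff: "(\<forall>u\<in>set ps. length u = 1) \<longleftrightarrow> ps = map (\<lambda>x. [x]) (concat ps)"
proof (induction ps)
  case Nil
  then show ?case by simp
next
  case (Cons u ps)
  show ?case
  proof
    assume "\<forall>u\<in>set (u # ps). length u = 1"
    then show "u # ps = map (\<lambda>x. [x]) (concat (u # ps))"
      using Cons by (auto simp: length_Suc_conv)
  next
    assume h: "u # ps = map (\<lambda>x. [x]) (concat (u # ps))"
    then obtain x v where u: "u = x # v" by (cases u) auto
    with h have "v = []" by (cases v) auto
    with h u Cons show "\<forall>u\<in>set (u # ps). length u = 1" by auto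
  qed
qed

lemma mcomp_mI:
  fixes M :: "'n mould"
  shows "mcomp M mI = M"
proof
  fix a :: "'n deg list"
  let ?S = "{ps. concat ps = a \<and> [] \<notin> set ps}"
  let ?p = "map (\<lambda>x. [x]) a"
  have "?p \<in> ?S" by (induction a) auto
  have "mcomp M mI a = (\<Sum>ps\<in>?S. if ps = ?p then M (map wnorm ps) else 0)"
    unfolding mcomp_def prod_list_mI by (rule sum.cong[OF refl]) (use all_singletons_iff in auto)
  also have "\<dots> = M (map wnorm ?p)"
    using finite_factorisations[of a] \<open>?p \<in> ?S\<close> by simp
  also have "map wnorm ?p = a" by (induction a) (auto simp: wnorm_def)
  finally show "mcomp M mI a = M a" .
qed

definition pos_degs :: "'n::finite deg set" where
  "pos_degs = {c. 1 \<le> tdeg c}"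

definition pos_supported_hom :: "('n::finite deg \<Rightarrow> 'n op) \<Rightarrow> bool" where
  "pos_supported_hom DD \<longleftrightarrow> (\<forall>c. hom_op c (DD c) \<and> (tdeg c < 1 \<longrightarrow> DD c = opzero))"

lemma pos_hom_family_pos_degs: "pos_supported_hom DD \<Longrightarrow> pos_hom_family DD pos_degs"
  by (simp add: pos_supported_hom_def pos_hom_family_def pos_degs_def)

lemma wordsum_at_monomial:
  assumes D: "pos_hom_family D A" and c: "deg_le c j"
  shows "wordsum P D A (\<lambda>l. if l = mono_sub j c then 1 else 0) j =
    (\<Sum>w\<in>{w \<in> fitting_words A j. wnorm w = c}. P w * word_coeff D w j)"
proof -
  have "wordsum P D A (\<lambda>l. if l = mono_sub j c then 1 else 0) j =
      (\<Sum>w\<in>fitting_words A j. if wnorm w = c then P w * word_coeff D w j else 0)"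
    unfolding wordsum_eq_sum[OF D]
    by (rule sum.cong[OF refl]) (use word_end_eq_mono_sub_iff c in \<open>auto simp: fitting_words_def\<close>)
  also have "\<dots> = (\<Sum>w\<in>{w \<in> fitting_words A j. wnorm w = c}. P w * word_coeff D w j)"
    by (rule sum.inter_filter[symmetric, OF finite_fitting_words_pos_hom[OF D]])
  finally show ?thesis .
qed

lemma letter_eq_homogeneous_component:
  assumes D: "pos_hom_family D A" and DD: "pos_supported_hom DD"
    and eq: "wordsum mI DD pos_degs = wordsum P D A"
    and c: "c \<in> pos_degs"
  shows "DD c \<psi> j = (\<Sum>w\<in>{w \<in> fitting_words A j. wnorm w = c}. P w * (word_coeff D w j * \<psi> (word_end w j)))"
proof (cases "deg_le c j")
  case False
  have none: "{w \<in> fitting_words A j. wnorm w = c} = {}"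
    using False deg_le_wnorm by (auto simp: fitting_words_def)
  show ?thesis
    unfolding none using False DD by (simp add: hom_op_apply[of c "DD c"] pos_supported_hom_def)
next
  case True
  have DD': "pos_hom_family DD pos_degs" using DD by (rule pos_hom_family_pos_degs)
  let ?k = "mono_sub j c"
  let ?U = "{w \<in> fitting_words A j. wnorm w = c}"
  let ?U' = "{w \<in> fitting_words pos_degs j. wnorm w = c}"
  text \<open>Applying both sides of eq to the monomial x^(j - c) isolates the letter c.\<close>
  have "hom_coeff c (DD c) ?k = (\<Sum>w\<in>{[c]}. mI w * word_coeff DD w j)"
    by (simp add: mI_def)
  also have "\<dots> = (\<Sum>w\<in>?U'. mI w * word_coeff DD w j)"
  proof (rule sum.mono_neutral_left)
    show "finite ?U'" using finite_fitting_words_pos_hom[OF DD'] by simp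
    show "{[c]} \<subseteq> ?U'" using c True by (simp add: fitting_words_def wnorm_def)
    show "\<forall>w\<in>?U' - {[c]}. mI w * word_coeff DD w j = 0"
      by (auto simp: mI_def length_Suc_conv wnorm_def)
  qed
  also have "\<dots> = (\<Sum>w\<in>?U. P w * word_coeff D w j)"
    using wordsum_at_monomial[OF DD' True, of mI] wordsum_at_monomial[OF D True, of P] eq by simp
  finally have coeff: "hom_coeff c (DD c) ?k = (\<Sum>w\<in>?U. P w * word_coeff D w j)" .
  have "word_end w j = ?k" if "w \<in> ?U" for w
    using that word_end_eq_mono_sub_iff[OF _ True, of w] by (auto simp: fitting_words_def)
  then show ?thesis
    using True DD
    by (simp add: hom_op_apply[of c "DD c"] pos_supported_hom_def coeff sum_distrib_right mult.assoc)
qed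

definition block_splits :: "'n deg set \<Rightarrow> 'n mono \<Rightarrow> 'n deg list list set" where
  "block_splits A j = {ps. concat ps \<in> fitting_words A j \<and> [] \<notin> set ps}"

lemma finite_block_splits:
  assumes "pos_hom_family D A"
  shows "finite (block_splits A j)"
proof (rule finite_subset)
  show "block_splits A j \<subseteq> (\<Union>a\<in>fitting_words A j. {ps. concat ps = a \<and> [] \<notin> set ps})"
    unfolding block_splits_def by auto
  show "finite (\<Union>a\<in>fitting_words A j. {ps. concat ps = a \<and> [] \<notin> set ps})"
    using finite_fitting_words_pos_hom[OF assms] finite_factorisations by blast
qed

lemma sum_block_splits_Cons:
  assumes c: "c \<in> pos_degs"
  shows "(\<Sum>qs\<in>{ps \<in> block_splits A j. map wnorm ps = c # b}. g qs) =
    (\<Sum>(u, ps)\<in>Sigma {u \<in> fitting_words A j. wnorm u = c}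
        (\<lambda>u. {ps \<in> block_splits A (word_end u j). map wnorm ps = b}). g (u # ps))"
  (is "_ = sum _ ?Sigma")
proof (rule sym, rule sum.reindex_bij_witness[where i = "\<lambda>qs. (hd qs, tl qs)" and j = "\<lambda>(u, ps). u # ps"])
  fix a assume a: "a \<in> ?Sigma"
  then show "(hd (case a of (u, ps) \<Rightarrow> u # ps), tl (case a of (u, ps) \<Rightarrow> u # ps)) = a" by auto
  have "fst a \<noteq> []" using a c by (auto simp: pos_degs_def tdeg_zero)
  then show "(case a of (u, ps) \<Rightarrow> u # ps) \<in> {ps \<in> block_splits A j. map wnorm ps = c # b}"
    using a by (auto simp: block_splits_def append_in_fitting_words_iff)
next
  fix q assume q: "q \<in> {ps \<in> block_splits A j. map wnorm ps = c # b}"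
  then obtain u ps where q_eq: "q = u # ps" by (cases q) auto
  show "(case (hd q, tl q) of (u, ps) \<Rightarrow> u # ps) = q" using q_eq by simp
  show "(hd q, tl q) \<in> ?Sigma"
    using q q_eq by (auto simp: block_splits_def append_in_fitting_words_iff)
qed auto

lemma Dword_subst:
  assumes D: "pos_hom_family D A" and DD: "pos_supported_hom DD"
    and eq: "wordsum mI DD pos_degs = wordsum P D A"
  shows "b \<in> lists pos_degs \<Longrightarrow> Dword DD b \<psi> j =
     (\<Sum>ps\<in>{ps \<in> block_splits A j. map wnorm ps = b}.
        prod_list (map P ps) * (word_coeff D (concat ps) j * \<psi> (word_end (concat ps) j)))"
proof (induction b arbitrary: j)
  case Nil
  have "{ps \<in> block_splits A j. map wnorm ps = []} = {[]}"
    by (auto simp: block_splits_def fitting_words_def)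
  then show ?case by simp
next
  case (Cons c b)
  have c: "c \<in> pos_degs" and b: "b \<in> lists pos_degs" using Cons.prems by auto
  let ?S = "\<lambda>b j. {ps \<in> block_splits A j. map wnorm ps = b}"
  let ?U = "{u \<in> fitting_words A j. wnorm u = c}"
  let ?X = "\<lambda>ps j. prod_list (map P ps) * (word_coeff D (concat ps) j * \<psi> (word_end (concat ps) j))"
  have fin: "finite (?S b j)" for j
    by (rule finite_subset[OF _ finite_block_splits[OF D]]) auto
  have "Dword DD (c # b) \<psi> j = (\<Sum>u\<in>?U. P u * (word_coeff D u j * Dword DD b \<psi> (word_end u j)))"
    using letter_eq_homogeneous_component[OF D DD eq c] by simp
  also have "\<dots> = (\<Sum>u\<in>?U. \<Sum>ps\<in>?S b (word_end u j). ?X (u # ps) j)"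
    by (simp add: Cons.IH[OF b] sum_distrib_left word_coeff_append word_end_append mult_ac)
  also have "\<dots> = (\<Sum>(u, ps)\<in>Sigma ?U (\<lambda>u. ?S b (word_end u j)). ?X (u # ps) j)"
    by (rule sum.Sigma) (use finite_fitting_words_pos_hom[OF D] fin in auto)
  also have "\<dots> = (\<Sum>qs\<in>?S (c # b) j. ?X qs j)"
    by (rule sum_block_splits_Cons[OF c, symmetric])
  finally show ?case .
qed

lemma map_wnorm_in_lists_pos_degs:
  assumes D: "pos_hom_family D A" and ps: "ps \<in> block_splits A j"
  shows "map wnorm ps \<in> lists pos_degs"
proof -
  have "wnorm u \<in> pos_degs" if u: "u \<in> set ps" for u
  proof -
    have "u \<noteq> []" "u \<in> lists A" using ps u by (auto simp: block_splits_def fitting_words_def)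
    then have "1 \<le> int (length u)" "int (length u) \<le> tdeg (wnorm u)"
      using length_le_tdeg_wnorm[of u] D by (auto simp: pos_hom_family_def Suc_le_eq)
    then show ?thesis by (simp add: pos_degs_def)
  qed
  then show ?thesis by auto
qed

lemma concat_block_splits: "concat ` block_splits A j = fitting_words A j"
proof
  show "concat ` block_splits A j \<subseteq> fitting_words A j" by (auto simp: block_splits_def)
  show "fitting_words A j \<subseteq> concat ` block_splits A j"
  proof
    fix a assume "a \<in> fitting_words A j"
    moreover have "concat (map (\<lambda>x. [x]) a) = a" by (induction a) auto
    ultimately show "a \<in> concat ` block_splits A j"
      unfolding block_splits_def by (intro image_eqI[of _ _ "map (\<lambda>x. [x]) a"]) auto
  qed
qed

lemma wordsum_eq_sum_block_splits:
  assumes D: "pos_hom_family D A" and DD: "pos_supported_hom DD"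
    and eq: "wordsum mI DD pos_degs = wordsum P D A"
  shows "wordsum M DD pos_degs \<psi> j = (\<Sum>ps\<in>block_splits A j. M (map wnorm ps) *
    (prod_list (map P ps) * (word_coeff D (concat ps) j * \<psi> (word_end (concat ps) j))))"
proof -
  let ?B = "block_splits A j"
  let ?X = "\<lambda>ps. prod_list (map P ps) * (word_coeff D (concat ps) j * \<psi> (word_end (concat ps) j))"
  let ?T = "map wnorm ` ?B"
  have fin: "finite ?B" by (rule finite_block_splits[OF D])
  have T: "?T \<subseteq> lists pos_degs" using map_wnorm_in_lists_pos_degs[OF D] by blast
  have "wordsum M DD pos_degs \<psi> j = (\<Sum>b\<in>?T. M b * Dword DD b \<psi> j)"
    unfolding wordsum_def
  proof (rule infsum_eq_sum_superset)
    fix b assume b: "b \<in> lists pos_degs - ?T"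
    then have none: "{ps \<in> ?B. map wnorm ps = b} = {}" by auto
    show "M b * Dword DD b \<psi> j = 0" using Dword_subst[OF D DD eq, of b \<psi> j] b by (simp add: none)
  qed (use fin T in auto)
  also have "\<dots> = (\<Sum>b\<in>?T. \<Sum>ps\<in>{ps \<in> ?B. map wnorm ps = b}. M (map wnorm ps) * ?X ps)"
  proof (rule sum.cong[OF refl])
    fix b assume "b \<in> ?T"
    then have "b \<in> lists pos_degs" using T by blast
    then show "M b * Dword DD b \<psi> j = (\<Sum>ps\<in>{ps \<in> ?B. map wnorm ps = b}. M (map wnorm ps) * ?X ps)"
      using Dword_subst[OF D DD eq, of b \<psi> j] by (simp add: sum_distrib_left)
  qed
  also have "\<dots> = (\<Sum>ps\<in>?B. M (map wnorm ps) * ?X ps)"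
    by (rule sum.image_gen[symmetric, OF fin])
  finally show ?thesis .
qed

lemma wordsum_subst:
  assumes D: "pos_hom_family D A" and DD: "pos_supported_hom DD"
    and eq: "wordsum mI DD pos_degs = wordsum P D A"
  shows "wordsum M DD pos_degs = wordsum (mcomp M P) D A"
proof (intro ext)
  fix \<psi> j
  let ?B = "block_splits A j"
  let ?X = "\<lambda>ps. prod_list (map P ps) * (word_coeff D (concat ps) j * \<psi> (word_end (concat ps) j))"
  have "wordsum M DD pos_degs \<psi> j = (\<Sum>ps\<in>?B. M (map wnorm ps) * ?X ps)"
    by (rule wordsum_eq_sum_block_splits[OF D DD eq])
  also have "\<dots> = (\<Sum>a\<in>fitting_words A j. \<Sum>ps\<in>{ps \<in> ?B. concat ps = a}. M (map wnorm ps) * ?X ps)"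
    unfolding concat_block_splits[symmetric] by (rule sum.image_gen[OF finite_block_splits[OF D]])
  also have "\<dots> = wordsum (mcomp M P) D A \<psi> j"
    unfolding wordsum_eq_sum[OF D]
  proof (rule sum.cong[OF refl])
    fix a assume "a \<in> fitting_words A j"
    then have "{ps \<in> ?B. concat ps = a} = {ps. concat ps = a \<and> [] \<notin> set ps}"
      by (auto simp: block_splits_def)
    then show "(\<Sum>ps\<in>{ps \<in> ?B. concat ps = a}. M (map wnorm ps) * ?X ps) =
        mcomp M P a * (word_coeff D a j * \<psi> (word_end a j))"
      unfolding mcomp_def sum_distrib_right by (intro sum.cong) (auto simp: mult_ac)
  qed
  finally show "wordsum M DD pos_degs \<psi> j = wordsum (mcomp M P) D A \<psi> j" .
qed

lemma opsum_eq_wordsum_mI: "opsum D A = wordsum mI D A"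
  by (intro ext) (simp add: opsum_def wordsum_letters mI_def)

lemma opsum_UNIV_eq_wordsum_mI:
  assumes "pos_supported_hom DD"
  shows "opsum DD UNIV = wordsum mI DD pos_degs"
proof (intro ext)
  fix \<phi> j
  have "wordsum mI DD pos_degs \<phi> j = infsum (\<lambda>m. DD m \<phi> j) pos_degs"
    by (simp add: wordsum_letters mI_def)
  also have "\<dots> = infsum (\<lambda>m. DD m \<phi> j) UNIV"
    by (rule infsum_cong_neutral) (use assms in \<open>auto simp: pos_degs_def pos_supported_hom_def opzero_def\<close>)
  finally show "opsum DD UNIV \<phi> j = wordsum mI DD pos_degs \<phi> j" by (simp add: opsum_def)
qed

lemma wordsum_subst_if_Flin_exp_eq:
  assumes D: "pos_hom_family D A" and DD: "pos_supported_hom DD" and P0: "P [] = 0"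
    and eq: "Flin lam \<circ> opexp (opsum DD UNIV) = Flin lam \<circ> opexp (wordsum P D A)"
  shows "wordsum M DD pos_degs = wordsum (mcomp M P) D A"
proof (rule wordsum_subst[OF D DD])
  have "Flin lam \<circ> opexp (wordsum mI DD pos_degs) = Flin lam \<circ> opexp (wordsum P D A)"
    using eq by (simp add: opsum_UNIV_eq_wordsum_mI[OF DD])
  then show "wordsum mI DD pos_degs = wordsum P D A"
    by (intro wordsum_eq_if_Flin_exp_eq[where P' = P, OF pos_hom_family_pos_degs[OF DD] D _ P0])
      (simp_all add: mI_def)
qed

section \<open>One trimming step\<close>

lemma Vgen_eq_wordsum_Dem:
  assumes "pos_supported_hom DD"
  shows "Vgen lam DD = wordsum (Dem lam) DD pos_degs"
proof (intro ext)
  fix \<phi> j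
  have "wordsum (Dem lam) DD pos_degs \<phi> j = infsum (\<lambda>m. Dem lam [m] * DD m \<phi> j) pos_degs"
    by (rule wordsum_letters) (auto simp: Dem_def split: list.split)
  also have "\<dots> = infsum (\<lambda>m. (if exp (ldot lam m) \<noteq> 1
      then opscale (1 / (1 - exp (ldot lam m))) (DD m) else opzero) \<phi> j) UNIV"
    by (rule infsum_cong_neutral)
      (use assms in \<open>auto simp: Dem_def pos_degs_def pos_supported_hom_def opzero_def opscale_def\<close>)
  finally show "Vgen lam DD \<phi> j = wordsum (Dem lam) DD pos_degs \<phi> j"
    by (simp add: Vgen_def opsum_def)
qed

lemma Sem_Nil: "Sem lam [] = 1"
  by (simp add: Sem_def eDelta_def mExp_Nil mI_def Dem_def ldot_def)

lemma mLog_Sem_Nil: "mLog (Sem lam) [] = 0"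
  by (rule mLog_Nil[where S = "Sem lam", OF Sem_Nil])

lemma exp_Vgen_conj:
  assumes DD: "pos_supported_hom DD"
  shows "opexp (Vgen lam DD) \<circ> (Flin lam \<circ> opexp (opsum DD UNIV)) \<circ> opexp (opscale (-1) (Vgen lam DD))
       = Flin lam \<circ> opexp (wordsum (mLog (Sem lam)) DD pos_degs)"
proof -
  have D: "pos_hom_family DD pos_degs" by (rule pos_hom_family_pos_degs[OF DD])
  let ?W = "\<lambda>M. wordsum M DD pos_degs"
  have "opexp (Vgen lam DD) = ?W (mExp (Dem lam))"
    by (simp add: Vgen_eq_wordsum_Dem[OF DD] opexp_wordsum[OF D] Dem_def)
  moreover have "opexp (opsum DD UNIV) = ?W (mExp mI)"
    by (simp add: opsum_UNIV_eq_wordsum_mI[OF DD] opexp_wordsum[OF D] mI_def)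
  moreover have "opexp (opscale (-1) (Vgen lam DD)) = ?W (mExp (\<lambda>w. - Dem lam w))"
    by (simp add: Vgen_eq_wordsum_Dem[OF DD] opscale_minus_wordsum[OF D] opexp_wordsum[OF D] Dem_def)
  ultimately have "opexp (Vgen lam DD) \<circ> (Flin lam \<circ> opexp (opsum DD UNIV))
      \<circ> opexp (opscale (-1) (Vgen lam DD))
      = Flin lam \<circ> (?W (eDelta lam (mExp (Dem lam))) \<circ> ?W (mExp mI) \<circ> ?W (mExp (\<lambda>w. - Dem lam w)))"
    by (simp add: comp_assoc wordsum_comp_Flin[OF D] flip: comp_assoc[of _ "Flin lam"])
  also have "\<dots> = Flin lam \<circ> ?W (Sem lam)"
    by (simp add: Sem_def wordsum_mmul[OF D])
  also have "\<dots> = Flin lam \<circ> opexp (?W (mLog (Sem lam)))"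
    by (simp add: opexp_wordsum[where M = "mLog (Sem lam)", OF D mLog_Sem_Nil] mExp_mLog[where S = "Sem lam", OF Sem_Nil])
  finally show ?thesis .
qed

lemma wordsum_descend_trimmed_letters:
  assumes D: "pos_hom_family D A"
    and DD: "\<And>i. 1 \<le> i \<Longrightarrow> i \<le> r \<Longrightarrow> pos_supported_hom (DD i)"
    and L0: "L [] = 0"
    and first: "Flin lam \<circ> opexp (opsum (DD 1) UNIV) = Flin lam \<circ> opexp (wordsum mI D A)"
    and next_step: "\<And>i. 1 \<le> i \<Longrightarrow> Suc i \<le> r \<Longrightarrow>
      Flin lam \<circ> opexp (opsum (DD (Suc i)) UNIV) = Flin lam \<circ> opexp (wordsum L (DD i) pos_degs)"
    and i: "1 \<le> i" "i \<le> r"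
  shows "wordsum M (DD i) pos_degs = wordsum (((\<lambda>M. mcomp M L) ^^ (i - 1)) M) D A"
  using i
proof (induction i arbitrary: M rule: nat_induct_at_least)
  case base
  have "pos_supported_hom (DD 1)" using DD base by simp
  then have "wordsum M (DD 1) pos_degs = wordsum (mcomp M mI) D A"
    by (rule wordsum_subst_if_Flin_exp_eq[OF D _ _ first]) (simp add: mI_def)
  then show ?case by (simp add: mcomp_mI)
next
  case (Suc i)
  let ?f = "\<lambda>M. mcomp M L"
  have "pos_supported_hom (DD i)" "pos_supported_hom (DD (Suc i))" using DD Suc by auto
  then have "wordsum M (DD (Suc i)) pos_degs = wordsum (?f M) (DD i) pos_degs"
    by (intro wordsum_subst_if_Flin_exp_eq[where P = L, OF pos_hom_family_pos_degs _ L0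
        next_step[OF Suc.hyps Suc.prems]])
  also have "\<dots> = wordsum ((?f ^^ (i - 1)) (?f M)) D A"
    using Suc.IH Suc.prems by simp
  also have "(?f ^^ (i - 1)) (?f M) = (?f ^^ i) M"
    using Suc.hyps by (cases i) (simp_all del: funpow.simps add: funpow_Suc_right)
  finally show ?case by simp
qed

theorem mainTheorem6:
  fixes lam :: "'n::finite \<Rightarrow> complex"
    and f :: "'n \<Rightarrow> 'n series"
    and A :: "'n deg set"
    and D :: "'n deg \<Rightarrow> 'n op"
    and G :: "nat \<Rightarrow> 'n op"
    and DD :: "nat \<Rightarrow> 'n deg \<Rightarrow> 'n op"
    and r :: nat
  assumes f_lin: "\<forall>i k. tdeg k \<le> 1 \<longrightarrow> f i k = (if k = unitv i then exp (lam i) else 0)"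
    and f_analytic: "\<exists>C R. 0 < R \<and> (\<forall>i k. cmod (f i k) \<le> C * R ^ tdeg k)"
    and A_add: "\<forall>a\<in>A. \<forall>b\<in>A. (\<lambda>i. a i + b i) \<in> A"
    and A_pos: "\<forall>m\<in>A. 1 \<le> tdeg m"
    and D_hom: "\<forall>m\<in>A. hom_der m (D m)"
    and F_eq: "compF f = Flin lam \<circ> opexp (opsum D A)"
    and r_pos: "1 \<le> r"
    and G0: "G 0 = compF f"
    and DD_hom: "\<forall>i\<in>{1..r}. \<forall>m. hom_der m (DD i m) \<and> (tdeg m < 1 \<longrightarrow> DD i m = opzero)"
    and DD_eq: "\<forall>i\<in>{1..r}. G (i - 1) = Flin lam \<circ> opexp (opsum (DD i) UNIV)"
    and G_step: "\<forall>i\<in>{1..r}. G i = opexp (Vgen lam (DD i)) \<circ> G (i - 1)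
                                     \<circ> opexp (opscale (-1) (Vgen lam (DD i)))"
  shows "G r = Flin lam \<circ> opexp (wordsum (mcomp_pow (mLog (Sem lam)) r) D A)"
proof -
  let ?L = "mLog (Sem lam)"
  have D: "pos_hom_family D A" using D_hom A_pos by (simp add: pos_hom_family_def hom_der_def)
  have DD: "pos_supported_hom (DD i)" if "1 \<le> i" "i \<le> r" for i
    using DD_hom that by (simp add: pos_supported_hom_def hom_der_def)
  have G_Log: "G i = Flin lam \<circ> opexp (wordsum ?L (DD i) pos_degs)" if "1 \<le> i" "i \<le> r" for i
    using exp_Vgen_conj[OF DD[OF that]] G_step DD_eq that by simp
  have first: "Flin lam \<circ> opexp (opsum (DD 1) UNIV) = Flin lam \<circ> opexp (wordsum mI D A)"
    using DD_eq[rule_format, of 1] G0 F_eq r_pos by (simp add: opsum_eq_wordsum_mI[of D A])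
  have next_step: "Flin lam \<circ> opexp (opsum (DD (Suc i)) UNIV) = Flin lam \<circ> opexp (wordsum ?L (DD i) pos_degs)"
    if "1 \<le> i" "Suc i \<le> r" for i
    using DD_eq[rule_format, of "Suc i"] G_Log[of i] that by simp
  have "wordsum ?L (DD r) pos_degs = wordsum (((\<lambda>M. mcomp M ?L) ^^ (r - 1)) ?L) D A"
    by (rule wordsum_descend_trimmed_letters[where L = ?L and r = r and DD = DD,
          OF D DD mLog_Sem_Nil first next_step r_pos order_refl])
  then show ?thesis using G_Log[of r] r_pos by (simp add: mcomp_pow_def)
qed

end
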